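(* Let $0<a<b$ and let $\mu$ be the positive measure on $[0,+\infty[$ defined by $\int f\,d\mu=\frac1{2\pi}\int_a^b f(t)\sqrt{(t-a)(b-t)}\,\frac{dt}t$. Then $$\frac1{2\pi}\int_a^b\sqrt{(t-a)(b-t)}\frac{dt}t=\frac14(\sqrt b-\sqrt a)^2,\qquad \lim_{x\to+\infty}\Big(U^\mu(x)+\frac14(\sqrt b-\sqrt a)^2\log x\Big)=0,$$ and for all $x\ge b$, $$U^\mu(x)=-\frac12\big(x-\sqrt{ab}\log x\big)+C_\mu+\frac12\int_b^x\sqrt{(t-a)(t-b)}\frac{dt}t,$$ where $C_\mu=\frac14(a+b)\Big(1-\log\frac{b-a}4\Big)-\frac{\sqrt{ab}}2\log\frac{\sqrt b+\sqrt a}{\sqrt b-\sqrt a}$.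
   Context: $U^\mu(x)=\int\log\frac1{|x-t|}\,\mu(dt)$ denotes the logarithmic potential of $\mu$. *)

theory Defs
  imports "HOL-Analysis.Analysis"
begin

definition log_potential :: "real measure \<Rightarrow> real \<Rightarrow> real" where
  "log_potential \<mu> x = (\<integral>t. ln (1 / \<bar>x - t\<bar>) \<partial>\<mu>)"

definition mp_measure :: "real \<Rightarrow> real \<Rightarrow> real measure" where
  "mp_measure a b = density lborel
     (\<lambda>t. ennreal (indicator {a..b} t * sqrt ((t - a) * (b - t)) / (2 * pi * t)))"

end

theory Submission
  imports Defs "HOL-Real_Asymp.Real_Asymp"
begin

(* On [a,b] the functions sqrt((t-a)(b-t))/t and sqrt((t-a)(b-t))/(x-t) have explicit arcsine
   primitives. They give the mass of mu and, through 1/(t(x-t)) = (1/t + 1/(x-t))/x, its Stieltjes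
   transform  S(x) = (x - sqrt(ab) - sqrt((x-a)(x-b)))/(2x)  for x > b.  Differentiating under the
   integral, U^mu' = -S on ]b,+oo[, and S is also minus the derivative of the claimed closed form,
   whose last integral has an explicit logarithmic primitive.  So U^mu and the closed form differ by a
   constant on [b,+oo[ (U^mu is continuous at b, although its integrand is singular there), and the
   constant is 0 because both sides equal -m log x + o(1) at infinity, m being the mass of mu. *)

lemma DERIV_real_sqrt_comp:
  assumes "(h has_real_derivative h') (at t)" "0 < h t"
  shows "((\<lambda>t. sqrt (h t)) has_real_derivative h' / (2 * sqrt (h t))) (at t)"
  using DERIV_chain2[OF DERIV_real_sqrt[OF assms(2)] assms(1)] by (simp add: field_simps)

lemma DERIV_ln_comp:
  assumes "(h has_real_derivative h') (at t)" "0 < h t"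
  shows "((\<lambda>t. ln (h t)) has_real_derivative h' / h t) (at t)"
  using DERIV_chain2[OF DERIV_ln[OF assms(2)] assms(1)] by (simp add: field_simps)

lemma DERIV_arcsin_comp:
  assumes "(h has_real_derivative h') (at t)" "1 - (h t)^2 = k^2" "0 < k"
  shows "((\<lambda>t. arcsin (h t)) has_real_derivative h' / k) (at t)"
proof -
  have "(h t)^2 < 1"
    using assms(2,3) zero_less_power[of k 2] by linarith
  then have "-1 < h t" "h t < 1"
    by (simp_all add: abs_square_less_1 abs_less_iff)
  moreover have "sqrt (1 - (h t)^2) = k"
    using assms(2,3) by simp
  ultimately show ?thesis
    using DERIV_chain2[OF DERIV_arcsin assms(1)] by (simp add: field_simps)
qed

lemma one_minus_square_div:
  fixes D N M :: real
  assumes "D \<noteq> 0" "D^2 - N^2 = M^2"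
  shows "1 - (N / D)^2 = (M / D)^2"
proof -
  have "1 - (N / D)^2 = (D^2 - N^2) / D^2"
    using assms(1) by (simp add: power_divide field_simps)
  then show ?thesis
    by (simp add: assms(2) power_divide)
qed

lemma power2_sqrt_diff:
  "0 \<le> a \<Longrightarrow> 0 \<le> b \<Longrightarrow> (sqrt b - sqrt a)^2 = a + b - 2 * sqrt (a * b)"
  by (simp add: power2_eq_square algebra_simps real_sqrt_mult)

lemma interval_integral_eq_integral_continuous:
  fixes f :: "real \<Rightarrow> real"
  assumes "a \<le> b" "continuous_on {a..b} f"
  shows "(LBINT t=a..b. f t) = integral {a..b} f"
  using assms borel_integrable_compact[OF compact_Icc assms(2)]
  by (simp add: interval_integral_eq_integral set_integrable_def)

lemma sqrt_mult_abs_ln_le: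
  fixes s K :: real
  assumes "0 < s" "s \<le> K"
  shows "sqrt s * \<bar>ln s\<bar> \<le> 2 + K^2"
proof (cases "1 \<le> s")
  case True
  have "sqrt s \<le> s"
    using True real_sqrt_le_mono[of s "s * s"] by (simp add: mult_le_cancel_left1)
  moreover have "0 \<le> ln s" "ln s \<le> s"
    using True ln_le_minus_one[of s] by auto
  ultimately have "sqrt s * \<bar>ln s\<bar> \<le> s * s"
    by (intro mult_mono) auto
  also have "\<dots> \<le> K * K"
    using assms by (intro mult_mono) auto
  finally show ?thesis
    by (simp add: power2_eq_square)
next
  case False
  have sqrt_pos: "0 < sqrt s"
    using assms by simp
  have "ln (1 / sqrt s) \<le> 1 / sqrt s - 1"
    using sqrt_pos by (intro ln_le_minus_one) auto
  moreover have "ln (1 / sqrt s) = - ln s / 2"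
    using assms by (simp add: ln_div ln_sqrt)
  moreover have "ln s < 0"
    using False assms by simp
  ultimately have "\<bar>ln s\<bar> \<le> 2 / sqrt s"
    by (simp add: field_simps)
  then have "sqrt s * \<bar>ln s\<bar> \<le> 2"
    using sqrt_pos mult_left_mono[of "\<bar>ln s\<bar>" "2 / sqrt s" "sqrt s"] by simp
  then show ?thesis
    using zero_le_power2[of K] by linarith
qed

lemma ln_one_plus_le_two_sqrt:
  fixes z :: real
  assumes "0 \<le> z"
  shows "ln (1 + z) \<le> 2 * sqrt z"
proof -
  have "1 + z \<le> (1 + sqrt z)^2"
    using assms by (simp add: power2_eq_square algebra_simps)
  then have "ln (1 + z) \<le> ln ((1 + sqrt z)^2)"
    using assms by (subst ln_le_cancel_iff) auto
  also have "\<dots> = 2 * ln (1 + sqrt z)"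
    by (simp add: ln_realpow)
  also have "\<dots> \<le> 2 * sqrt z"
    using ln_add_one_self_le_self[of "sqrt z"] assms by simp
  finally show ?thesis .
qed

lemma two_sqrt_mult_less_add:
  fixes a b :: real
  assumes "0 \<le> a" "a < b"
  shows "2 * sqrt (a * b) < a + b"
proof -
  have "0 < (sqrt b - sqrt a)^2"
    using assms by simp
  then show ?thesis
    using assms power2_sqrt_diff[of a b] by linarith
qed

lemma DERIV_integral_log_kernel:
  fixes g :: "real \<Rightarrow> real"
  assumes "continuous_on {a..b} g" "b < y"
  shows "((\<lambda>x. integral {a..b} (\<lambda>t. - (g t * ln (x - t)))) has_real_derivative
           integral {a..b} (\<lambda>t. - (g t / (y - t)))) (at y)"
proof -
  have "((\<lambda>x. integral (cbox a b) (\<lambda>t. - (g t * ln (x - t)))) has_field_derivative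
      integral (cbox a b) (\<lambda>t. - (g t / (y - t)))) (at y within {b<..})"
  proof (rule leibniz_rule_field_derivative)
    fix x t :: real
    assume "x \<in> {b<..}" "t \<in> cbox a b"
    then have "0 < x - t"
      by auto
    with DERIV_ln_comp[of "\<lambda>x. x - t" 1 x]
    have "((\<lambda>x. ln (x - t)) has_real_derivative 1 / (x - t)) (at x)"
      using DERIV_diff[OF DERIV_ident DERIV_const[of t]] by simp
    from DERIV_minus[OF DERIV_cmult[OF this, of "g t"]]
    show "((\<lambda>x. - (g t * ln (x - t))) has_field_derivative - (g t / (x - t))) (at x within {b<..})"
      by (simp add: has_field_derivative_at_within)
  next
    fix x :: real
    assume "x \<in> {b<..}"
    then show "(\<lambda>t. - (g t * ln (x - t))) integrable_on cbox a b"
      using assms by (auto intro!: integrable_continuous_interval continuous_intros)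
  next
    show "continuous_on ({b<..} \<times> cbox a b) (\<lambda>(x, t). - (g t / (x - t)))"
      unfolding case_prod_unfold using assms
      by (intro continuous_intros continuous_on_compose2[OF assms(1)]) auto
  qed (use assms in auto)
  then show ?thesis
    using at_within_open[of y "{b<..}"] assms by simp
qed

lemma DERIV_zero_tendsto_zero_imp_zero:
  fixes f :: "real \<Rightarrow> real"
  assumes cont: "continuous_on {b..} f"
    and deriv: "\<And>y. b < y \<Longrightarrow> (f has_real_derivative 0) (at y)"
    and tends: "(f \<longlongrightarrow> 0) at_top"
    and "b \<le> x"
  shows "f x = 0"
proof -
  have const: "f z = f b" if "b < z" for z
    using DERIV_isconst_end[OF that continuous_on_subset[OF cont] deriv] by auto
  have "\<forall>\<^sub>F z in at_top. f z = f b"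
    using eventually_gt_at_top[of b] by eventually_elim (rule const)
  from Lim_transform_eventually[OF tends this] have "f b = 0"
    by (simp add: tendsto_const_iff)
  then show ?thesis
    using const \<open>b \<le> x\<close> by (cases "x = b") auto
qed

lemma DERIV_sqrt_semicircle:
  fixes a b t :: real
  assumes "a < t" "t < b"
  shows "((\<lambda>t. sqrt ((t - a) * (b - t))) has_real_derivative
           (a + b - 2 * t) / (2 * sqrt ((t - a) * (b - t)))) (at t)"
proof (rule DERIV_real_sqrt_comp)
  show "((\<lambda>t. (t - a) * (b - t)) has_real_derivative a + b - 2 * t) (at t)"
    by (auto intro!: derivative_eq_intros simp: algebra_simps)
  show "0 < (t - a) * (b - t)"
    using assms by simp
qed

lemma DERIV_arcsin_semicircle:
  fixes a b t :: real
  assumes "a < t" "t < b"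
  shows "((\<lambda>t. arcsin ((2 * t - a - b) / (b - a))) has_real_derivative
           1 / sqrt ((t - a) * (b - t))) (at t)"
proof -
  define q where "q = sqrt ((t - a) * (b - t))"
  have q: "0 < q" "q^2 = (t - a) * (b - t)"
    using assms by (auto simp: q_def)
  have "((\<lambda>t. arcsin ((2 * t - a - b) / (b - a))) has_real_derivative
          (2 / (b - a)) / (2 * q / (b - a))) (at t)"
  proof (rule DERIV_arcsin_comp)
    show "((\<lambda>t. (2 * t - a - b) / (b - a)) has_real_derivative 2 / (b - a)) (at t)"
      by (rule DERIV_cdivide) (auto intro!: derivative_eq_intros)
    show "1 - ((2 * t - a - b) / (b - a))^2 = (2 * q / (b - a))^2"
      using assms by (simp add: power_divide q(2) field_simps) (simp add: algebra_simps power2_eq_square)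
    show "0 < 2 * q / (b - a)"
      using q assms by simp
  qed
  moreover have "(2 / (b - a)) / (2 * q / (b - a)) = 1 / q"
    using q assms by (simp add: field_simps)
  ultimately show ?thesis
    by (simp add: q_def)
qed

definition semicircle_div_primitive :: "real \<Rightarrow> real \<Rightarrow> real \<Rightarrow> real" where
  "semicircle_div_primitive a b t = sqrt ((t - a) * (b - t))
     + (a + b) / 2 * arcsin ((2 * t - a - b) / (b - a))
     - sqrt (a * b) * arcsin (((a + b) * t - 2 * a * b) / ((b - a) * t))"

definition semicircle_cauchy_primitive :: "real \<Rightarrow> real \<Rightarrow> real \<Rightarrow> real \<Rightarrow> real" where
  "semicircle_cauchy_primitive a b x t = - sqrt ((t - a) * (b - t))
     + (x - (a + b) / 2) * arcsin ((2 * t - a - b) / (b - a))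
     + sqrt ((x - a) * (x - b))
       * arcsin (((2 * x - a - b) * (x - t) - 2 * ((x - a) * (x - b))) / ((x - t) * (b - a)))"

lemma DERIV_arcsin_semicircle_div:
  fixes a b t :: real
  assumes "0 < a" "a < t" "t < b"
  shows "((\<lambda>t. arcsin (((a + b) * t - 2 * a * b) / ((b - a) * t))) has_real_derivative
           sqrt (a * b) / (t * sqrt ((t - a) * (b - t)))) (at t)"
proof -
  define q where "q = sqrt ((t - a) * (b - t))"
  define c where "c = sqrt (a * b)"
  have q: "0 < q" "q^2 = (t - a) * (b - t)"
    using assms by (auto simp: q_def)
  have c: "0 < c" "c^2 = a * b"
    using assms by (auto simp: c_def)
  have t: "0 < t"
    using assms by simp
  have "((\<lambda>t. arcsin (((a + b) * t - 2 * a * b) / ((b - a) * t))) has_real_derivative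
          (2 * a * b / ((b - a) * t^2)) / (2 * c * q / ((b - a) * t))) (at t)"
  proof (rule DERIV_arcsin_comp)
    have "((\<lambda>t. ((a + b) * t - 2 * a * b) / t) has_real_derivative 2 * a * b / t^2) (at t)"
      using t by (auto intro!: derivative_eq_intros simp: field_simps power2_eq_square)
    from DERIV_cdivide[OF this, of "b - a"]
    show "((\<lambda>t. ((a + b) * t - 2 * a * b) / ((b - a) * t)) has_real_derivative
            2 * a * b / ((b - a) * t^2)) (at t)"
      by (simp add: field_simps)
    show "1 - (((a + b) * t - 2 * a * b) / ((b - a) * t))^2 = (2 * c * q / ((b - a) * t))^2"
      using assms t
      by (simp add: power_divide power_mult_distrib q(2) c(2) field_simps)
        (simp add: algebra_simps power2_eq_square)
    show "0 < 2 * c * q / ((b - a) * t)"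
      using q c t assms by simp
  qed
  moreover have "(2 * a * b / ((b - a) * t^2)) / (2 * c * q / ((b - a) * t)) = c^2 / (c * t * q)"
    using q c t assms by (simp add: c(2) field_simps power2_eq_square)
  moreover have "c^2 / (c * t * q) = c / (t * q)"
    using c(1) by (simp add: power2_eq_square)
  ultimately show ?thesis
    unfolding q_def c_def by simp
qed

lemma DERIV_semicircle_div_primitive:
  fixes a b t :: real
  assumes "0 < a" "a < t" "t < b"
  shows "(semicircle_div_primitive a b has_real_derivative sqrt ((t - a) * (b - t)) / t) (at t)"
proof -
  define q where "q = sqrt ((t - a) * (b - t))"
  define c where "c = sqrt (a * b)"
  have q: "0 < q" "q^2 = (t - a) * (b - t)"
    using assms by (auto simp: q_def)
  have c: "c^2 = a * b"
    using assms by (simp add: c_def)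
  have t: "0 < t"
    using assms by simp
  have "(semicircle_div_primitive a b has_real_derivative
          (a + b - 2 * t) / (2 * q) + (a + b) / 2 * (1 / q) - c * (c / (t * q))) (at t)"
    unfolding semicircle_div_primitive_def[abs_def] c_def[symmetric]
    by (intro DERIV_diff DERIV_add DERIV_cmult
        DERIV_sqrt_semicircle[OF assms(2,3), folded q_def]
        DERIV_arcsin_semicircle[OF assms(2,3), folded q_def]
        DERIV_arcsin_semicircle_div[OF assms, folded q_def c_def])
  moreover have "(a + b - 2 * t) / (2 * q) + (a + b) / 2 * (1 / q) - c * (c / (t * q))
      = ((t - a) * (b - t)) / (t * q)"
    using q t by (simp add: field_simps power2_eq_square flip: c)
  moreover have "((t - a) * (b - t)) / (t * q) = q / t"
    using q t by (simp add: power2_eq_square flip: q(2))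
  ultimately show ?thesis
    by (simp add: q_def)
qed

lemma DERIV_arcsin_semicircle_cauchy:
  fixes a b x t :: real
  assumes "a < t" "t < b" "b < x"
  shows "((\<lambda>t. arcsin (((2 * x - a - b) * (x - t) - 2 * ((x - a) * (x - b))) / ((x - t) * (b - a))))
           has_real_derivative - sqrt ((x - a) * (x - b)) / ((x - t) * sqrt ((t - a) * (b - t)))) (at t)"
proof -
  define q where "q = sqrt ((t - a) * (b - t))"
  define P where "P = (x - a) * (x - b)"
  define p where "p = sqrt P"
  have q: "0 < q" "q^2 = (t - a) * (b - t)"
    using assms by (auto simp: q_def)
  have p: "0 < p" "p^2 = P"
    using assms by (auto simp: p_def P_def)
  have s: "0 < x - t"
    using assms by simp
  have "((\<lambda>t. arcsin (((2 * x - a - b) * (x - t) - 2 * P) / ((x - t) * (b - a)))) has_real_derivative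
          (- 2 * P / ((b - a) * (x - t)^2)) / (2 * p * q / ((x - t) * (b - a)))) (at t)"
  proof (rule DERIV_arcsin_comp)
    have "((\<lambda>t. ((2 * x - a - b) * (x - t) - 2 * P) / (x - t)) has_real_derivative
            - 2 * P / (x - t)^2) (at t)"
      using s by (auto intro!: derivative_eq_intros simp: field_simps power2_eq_square)
    from DERIV_cdivide[OF this, of "b - a"]
    show "((\<lambda>t. ((2 * x - a - b) * (x - t) - 2 * P) / ((x - t) * (b - a))) has_real_derivative
            - 2 * P / ((b - a) * (x - t)^2)) (at t)"
      by (simp add: field_simps)
    have "((x - t) * (b - a))^2 - ((2 * x - a - b) * (x - t) - 2 * P)^2 = 4 * P * ((t - a) * (b - t))"
      unfolding P_def by (simp add: power2_eq_square algebra_simps)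
    then show "1 - (((2 * x - a - b) * (x - t) - 2 * P) / ((x - t) * (b - a)))^2
        = (2 * p * q / ((x - t) * (b - a)))^2"
      using s assms by (intro one_minus_square_div) (auto simp: power_mult_distrib p(2) q(2))
    show "0 < 2 * p * q / ((x - t) * (b - a))"
      using p q s assms by simp
  qed
  moreover have "(- 2 * P / (B * s^2)) / (2 * p * q / (s * B)) = - P / (p * s * q)"
    if "B \<noteq> 0" "s \<noteq> 0" for B s
    using that p(1) q(1) by (simp add: field_simps power2_eq_square)
  from this[of "b - a" "x - t"]
  have "(- 2 * P / ((b - a) * (x - t)^2)) / (2 * p * q / ((x - t) * (b - a))) = - p / ((x - t) * q)"
    using p s assms by (simp add: power2_eq_square flip: p(2))
  ultimately show ?thesis
    by (simp add: P_def p_def q_def)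
qed

lemma DERIV_semicircle_cauchy_primitive:
  fixes a b x t :: real
  assumes "a < t" "t < b" "b < x"
  shows "(semicircle_cauchy_primitive a b x has_real_derivative sqrt ((t - a) * (b - t)) / (x - t)) (at t)"
proof -
  define q where "q = sqrt ((t - a) * (b - t))"
  define p where "p = sqrt ((x - a) * (x - b))"
  have q: "0 < q" "q^2 = (t - a) * (b - t)"
    using assms by (auto simp: q_def)
  have p: "p^2 = (x - a) * (x - b)"
    using assms by (simp add: p_def)
  have s: "0 < x - t"
    using assms by simp
  have "(semicircle_cauchy_primitive a b x has_real_derivative
          - ((a + b - 2 * t) / (2 * q)) + (x - (a + b) / 2) * (1 / q) + p * (- p / ((x - t) * q))) (at t)"
    unfolding semicircle_cauchy_primitive_def[abs_def] p_def[symmetric]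
    by (intro DERIV_add DERIV_minus DERIV_cmult
        DERIV_sqrt_semicircle[OF assms(1,2), folded q_def]
        DERIV_arcsin_semicircle[OF assms(1,2), folded q_def]
        DERIV_arcsin_semicircle_cauchy[OF assms, folded q_def p_def])
  moreover have "- ((a + b - 2 * t) / (2 * q)) + (x - (a + b) / 2) * (1 / q) + p * (- p / ((x - t) * q))
      = ((x + t - a - b) * (x - t) - p^2) / ((x - t) * q)"
    using q s by (simp add: field_simps power2_eq_square)
  moreover have "((x + t - a - b) * (x - t) - p^2) / ((x - t) * q) = q / (x - t)"
  proof -
    have "(x + t - a - b) * (x - t) - p^2 = q^2"
      unfolding p q(2) by (simp add: algebra_simps)
    then show ?thesis
      using q(1) by (simp add: power2_eq_square)
  qed
  ultimately show ?thesis
    by (simp add: q_def)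
qed

lemma continuous_on_semicircle_div_primitive:
  fixes a b :: real
  assumes "0 < a" "a < b"
  shows "continuous_on {a..b} (semicircle_div_primitive a b)"
proof -
  have "-1 \<le> ((a + b) * t - 2 * a * b) / ((b - a) * t) \<and> ((a + b) * t - 2 * a * b) / ((b - a) * t) \<le> 1"
    if "t \<in> {a..b}" for t
  proof -
    have "a * b \<le> b * t" "a * t \<le> a * b"
      using that assms by (simp_all add: mult_left_mono mult.commute)
    then show ?thesis
      using that assms by (simp add: field_simps)
  qed
  then show ?thesis
    unfolding semicircle_div_primitive_def[abs_def] using assms
    by (intro continuous_intros) (auto simp: field_simps)
qed

lemma continuous_on_semicircle_cauchy_primitive:
  fixes a b x :: real
  assumes "a < b" "b < x"
  shows "continuous_on {a..b} (semicircle_cauchy_primitive a b x)"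
proof -
  have "-1 \<le> ((2 * x - a - b) * (x - t) - 2 * ((x - a) * (x - b))) / ((x - t) * (b - a))
      \<and> ((2 * x - a - b) * (x - t) - 2 * ((x - a) * (x - b))) / ((x - t) * (b - a)) \<le> 1"
    if "t \<in> {a..b}" for t
  proof -
    have "(x - a) * (x - b) \<le> (x - a) * (x - t)" "(x - b) * (x - t) \<le> (x - b) * (x - a)"
      using that assms by (intro mult_left_mono; simp)+
    moreover have "0 < (x - t) * (b - a)"
      using that assms by simp
    ultimately show ?thesis
      by (simp add: field_simps)
  qed
  moreover have "-1 \<le> (2 * t - a - b) / (b - a) \<and> (2 * t - a - b) / (b - a) \<le> 1"
    if "t \<in> {a..b}" for t
    using that assms by (simp add: field_simps)
  ultimately show ?thesis
    unfolding semicircle_cauchy_primitive_def[abs_def] using assms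
    by (intro continuous_intros) auto
qed

lemma semicircle_div_has_integral:
  fixes a b :: real
  assumes "0 < a" "a < b"
  shows "((\<lambda>t. sqrt ((t - a) * (b - t)) / t) has_integral pi * ((a + b) / 2 - sqrt (a * b))) {a..b}"
proof -
  have "((\<lambda>t. sqrt ((t - a) * (b - t)) / t) has_integral
          semicircle_div_primitive a b b - semicircle_div_primitive a b a) {a..b}"
    using assms continuous_on_semicircle_div_primitive[OF assms] DERIV_semicircle_div_primitive[OF assms(1)]
    by (intro fundamental_theorem_of_calculus_interior)
      (auto simp: has_real_derivative_iff_has_vector_derivative)
  moreover have "semicircle_div_primitive a b b - semicircle_div_primitive a b a
      = pi * ((a + b) / 2 - sqrt (a * b))"
  proof -
    have "(2 * b - a - b) / (b - a) = 1" "((a + b) * b - 2 * a * b) / ((b - a) * b) = 1"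
      "(2 * a - a - b) / (b - a) = -1" "((a + b) * a - 2 * a * b) / ((b - a) * a) = -1"
      using assms by (simp_all add: field_simps)
    then show ?thesis
      by (simp add: semicircle_div_primitive_def arcsin_minus_1 algebra_simps)
  qed
  ultimately show ?thesis
    by simp
qed

lemma semicircle_cauchy_has_integral:
  fixes a b x :: real
  assumes "a < b" "b < x"
  shows "((\<lambda>t. sqrt ((t - a) * (b - t)) / (x - t)) has_integral
           pi * (x - (a + b) / 2 - sqrt ((x - a) * (x - b)))) {a..b}"
proof -
  have "((\<lambda>t. sqrt ((t - a) * (b - t)) / (x - t)) has_integral
          semicircle_cauchy_primitive a b x b - semicircle_cauchy_primitive a b x a) {a..b}"
    using assms continuous_on_semicircle_cauchy_primitive[OF assms]
      DERIV_semicircle_cauchy_primitive[OF _ _ assms(2)]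
    by (intro fundamental_theorem_of_calculus_interior)
      (auto simp: has_real_derivative_iff_has_vector_derivative)
  moreover have "semicircle_cauchy_primitive a b x b - semicircle_cauchy_primitive a b x a
      = pi * (x - (a + b) / 2 - sqrt ((x - a) * (x - b)))"
  proof -
    have "(2 * x - a - b) * (x - b) - 2 * ((x - a) * (x - b)) = - ((x - b) * (b - a))"
      "(2 * x - a - b) * (x - a) - 2 * ((x - a) * (x - b)) = (x - a) * (b - a)"
      by (simp_all add: algebra_simps)
    moreover have "(x - b) * (b - a) \<noteq> 0" "(x - a) * (b - a) \<noteq> 0"
      using assms by auto
    ultimately have "((2 * x - a - b) * (x - b) - 2 * ((x - a) * (x - b))) / ((x - b) * (b - a)) = -1"
      "((2 * x - a - b) * (x - a) - 2 * ((x - a) * (x - b))) / ((x - a) * (b - a)) = 1"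
      by simp_all
    moreover have "(2 * b - a - b) / (b - a) = 1" "(2 * a - a - b) / (b - a) = -1"
      using assms by (simp_all add: field_simps)
    ultimately show ?thesis
      by (simp add: semicircle_cauchy_primitive_def arcsin_minus_1 algebra_simps)
  qed
  ultimately show ?thesis
    by simp
qed

definition hyperbola_div_primitive :: "real \<Rightarrow> real \<Rightarrow> real \<Rightarrow> real" where
  "hyperbola_div_primitive a b t = sqrt ((t - a) * (t - b))
     - (a + b) / 2 * ln (2 * sqrt ((t - a) * (t - b)) + 2 * t - a - b)
     - sqrt (a * b) * (ln ((a + b) * t - 2 * a * b - 2 * sqrt (a * b) * sqrt ((t - a) * (t - b))) - ln t)"

lemma hyperbola_div_primitive_log_args_pos:
  fixes a b t :: real
  assumes "0 < a" "a < b" "b \<le> t"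
  shows "0 < 2 * sqrt ((t - a) * (t - b)) + 2 * t - a - b"
    and "0 < (a + b) * t - 2 * a * b - 2 * sqrt (a * b) * sqrt ((t - a) * (t - b))"
proof -
  have S: "0 \<le> (t - a) * (t - b)"
    using assms by simp
  show "0 < 2 * sqrt ((t - a) * (t - b)) + 2 * t - a - b"
    using assms real_sqrt_ge_zero[OF S] by linarith
  have y: "0 < (a + b) * t - 2 * a * b"
  proof -
    have "(a + b) * b \<le> (a + b) * t"
      using assms by (intro mult_left_mono) auto
    then have "b * (b - a) \<le> (a + b) * t - 2 * a * b"
      by (simp add: algebra_simps)
    moreover have "0 < b * (b - a)"
      using assms by simp
    ultimately show ?thesis
      by linarith
  qed
  have "(2 * sqrt (a * b) * sqrt ((t - a) * (t - b)))^2 = 4 * (a * b) * ((t - a) * (t - b))"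
    using assms S by (simp add: power_mult_distrib)
  also have "\<dots> = ((a + b) * t - 2 * a * b)^2 - ((b - a) * t)^2"
    by (simp add: power2_eq_square algebra_simps)
  also have "\<dots> < ((a + b) * t - 2 * a * b)^2"
  proof -
    have "0 < ((b - a) * t)^2"
      using assms by simp
    then show ?thesis
      by linarith
  qed
  finally have "2 * sqrt (a * b) * sqrt ((t - a) * (t - b)) < (a + b) * t - 2 * a * b"
    by (rule power2_less_imp_less) (use y in simp)
  then show "0 < (a + b) * t - 2 * a * b - 2 * sqrt (a * b) * sqrt ((t - a) * (t - b))"
    by simp
qed

lemma DERIV_sqrt_hyperbola:
  fixes a b t :: real
  assumes "a < b" "b < t"
  shows "((\<lambda>t. sqrt ((t - a) * (t - b))) has_real_derivative
           (2 * t - a - b) / (2 * sqrt ((t - a) * (t - b)))) (at t)"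
proof (rule DERIV_real_sqrt_comp)
  show "((\<lambda>t. (t - a) * (t - b)) has_real_derivative 2 * t - a - b) (at t)"
    by (auto intro!: derivative_eq_intros simp: algebra_simps)
  show "0 < (t - a) * (t - b)"
    using assms by simp
qed

lemma DERIV_hyperbola_log_term:
  fixes a b t :: real
  assumes "0 < a" "a < b" "b < t"
  shows "((\<lambda>t. ln ((a + b) * t - 2 * a * b - 2 * sqrt (a * b) * sqrt ((t - a) * (t - b))) - ln t)
           has_real_derivative - sqrt (a * b) / (t * sqrt ((t - a) * (t - b)))) (at t)"
proof -
  define q where "q = sqrt ((t - a) * (t - b))"
  define c where "c = sqrt (a * b)"
  define N where "N = (a + b) * t - 2 * a * b - 2 * c * q"
  have q: "0 < q" "q^2 = (t - a) * (t - b)"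
    using assms by (auto simp: q_def)
  have c: "0 < c" "c^2 = a * b"
    using assms by (auto simp: c_def)
  have t: "0 < t"
    using assms by simp
  have N: "0 < N"
    using hyperbola_div_primitive_log_args_pos(2)[of a b t] assms by (simp add: N_def c_def q_def)
  from DERIV_sqrt_hyperbola[of a b t, folded q_def] assms
  have "((\<lambda>t. (a + b) * t - 2 * a * b - 2 * c * sqrt ((t - a) * (t - b))) has_real_derivative
      (a + b) - 2 * c * ((2 * t - a - b) / (2 * q))) (at t)"
  proof (intro DERIV_diff DERIV_cmult)
    show "((\<lambda>t. (a + b) * t - 2 * a * b) has_real_derivative a + b) (at t)"
      by (auto intro!: derivative_eq_intros)
  qed
  from DERIV_ln_comp[OF this] DERIV_ln_divide[OF t] N
  have "((\<lambda>t. ln ((a + b) * t - 2 * a * b - 2 * c * sqrt ((t - a) * (t - b))) - ln t) has_real_derivative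
      ((a + b) - 2 * c * ((2 * t - a - b) / (2 * q))) / N - 1 / t) (at t)"
    unfolding N_def q_def by (intro DERIV_diff) auto
  moreover have "((a + b) - 2 * c * ((2 * t - a - b) / (2 * q))) / N - 1 / t = - c / (t * q)"
  proof -
    have "q * (t * ((a + b) - 2 * c * ((2 * t - a - b) / (2 * q))) - N)
        = - c * t * (2 * t - a - b) + 2 * a * b * q + 2 * c * q^2"
      using q(1) unfolding N_def by (simp add: field_simps power2_eq_square)
    also have "\<dots> = - c * t * (2 * t - a - b) + 2 * c^2 * q + 2 * c * ((t - a) * (t - b))"
      by (simp add: c(2) q(2) algebra_simps)
    also have "\<dots> = - c * N"
      unfolding N_def by (simp add: algebra_simps power2_eq_square)
    finally have key: "q * (t * ((a + b) - 2 * c * ((2 * t - a - b) / (2 * q))) - N) = - c * N" .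
    have "((a + b) - 2 * c * ((2 * t - a - b) / (2 * q))) / N - 1 / t
        = (q * (t * ((a + b) - 2 * c * ((2 * t - a - b) / (2 * q))) - N)) / (q * t * N)"
      using q(1) t N by (simp add: field_simps)
    then show ?thesis
      unfolding key using N by simp
  qed
  ultimately show ?thesis
    by (simp add: c_def q_def)
qed

lemma DERIV_ln_hyperbola:
  fixes a b t :: real
  assumes "a < b" "b < t"
  shows "((\<lambda>t. ln (2 * sqrt ((t - a) * (t - b)) + 2 * t - a - b)) has_real_derivative
           1 / sqrt ((t - a) * (t - b))) (at t)"
proof -
  define q where "q = sqrt ((t - a) * (t - b))"
  have q: "0 < q"
    using assms by (simp add: q_def)
  have pos: "0 < 2 * q + 2 * t - a - b"
    using q assms by simp
  have "((\<lambda>t. 2 * sqrt ((t - a) * (t - b)) + 2 * t - a - b) has_real_derivative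
      2 * ((2 * t - a - b) / (2 * q)) + 2) (at t)"
    using DERIV_add[OF DERIV_cmult[OF DERIV_sqrt_hyperbola[OF assms, folded q_def], of 2]
        DERIV_diff[OF DERIV_diff[OF DERIV_cmult[OF DERIV_ident, of 2] DERIV_const[of a]] DERIV_const[of b]]]
    by (simp add: algebra_simps)
  from DERIV_ln_comp[OF this] pos
  have "((\<lambda>t. ln (2 * sqrt ((t - a) * (t - b)) + 2 * t - a - b)) has_real_derivative
      (2 * ((2 * t - a - b) / (2 * q)) + 2) / (2 * q + 2 * t - a - b)) (at t)"
    by (simp add: q_def)
  moreover have "2 * ((2 * t - a - b) / (2 * q)) + 2 = (2 * q + 2 * t - a - b) / q"
    using q by (simp add: field_simps)
  ultimately show ?thesis
    using pos by (simp add: q_def)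
qed

lemma DERIV_hyperbola_div_primitive:
  fixes a b t :: real
  assumes "0 < a" "a < b" "b < t"
  shows "(hyperbola_div_primitive a b has_real_derivative sqrt ((t - a) * (t - b)) / t) (at t)"
proof -
  define q where "q = sqrt ((t - a) * (t - b))"
  define c where "c = sqrt (a * b)"
  have q: "0 < q" "q^2 = (t - a) * (t - b)"
    using assms by (auto simp: q_def)
  have c: "c^2 = a * b"
    using assms by (simp add: c_def)
  have t: "0 < t"
    using assms by simp
  have "(hyperbola_div_primitive a b has_real_derivative
          (2 * t - a - b) / (2 * q) - (a + b) / 2 * (1 / q) - c * (- c / (t * q))) (at t)"
    unfolding hyperbola_div_primitive_def[abs_def] c_def[symmetric]
    by (intro DERIV_diff DERIV_cmult
        DERIV_sqrt_hyperbola[OF assms(2,3), folded q_def]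
        DERIV_ln_hyperbola[OF assms(2,3), folded q_def]
        DERIV_hyperbola_log_term[OF assms, folded c_def q_def])
  moreover have "(2 * t - a - b) / (2 * q) - (a + b) / 2 * (1 / q) - c * (- c / (t * q))
      = ((t - a) * (t - b)) / (t * q)"
    using q(1) t by (simp add: field_simps power2_eq_square flip: c)
  moreover have "((t - a) * (t - b)) / (t * q) = q / t"
    using q(1) t by (simp add: power2_eq_square flip: q(2))
  ultimately show ?thesis
    by (simp add: q_def)
qed

lemma continuous_on_hyperbola_div_primitive:
  "0 < a \<Longrightarrow> a < b \<Longrightarrow> continuous_on {b..} (hyperbola_div_primitive a b)"
  unfolding hyperbola_div_primitive_def using hyperbola_div_primitive_log_args_pos[of a b]
  by (intro continuous_intros) (auto intro: order.strict_trans2 simp: less_imp_neq[symmetric])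

lemma hyperbola_div_interval_integral:
  fixes a b x :: real
  assumes "0 < a" "a < b" "b \<le> x"
  shows "(LBINT t=b..x. sqrt ((t - a) * (t - b)) / t)
    = hyperbola_div_primitive a b x - hyperbola_div_primitive a b b"
proof -
  have "((\<lambda>t. sqrt ((t - a) * (t - b)) / t) has_integral
          hyperbola_div_primitive a b x - hyperbola_div_primitive a b b) {b..x}"
    using assms continuous_on_subset[OF continuous_on_hyperbola_div_primitive[OF assms(1,2)]]
      DERIV_hyperbola_div_primitive[OF assms(1,2)]
    by (intro fundamental_theorem_of_calculus_interior)
      (auto simp: has_real_derivative_iff_has_vector_derivative)
  moreover have "continuous_on {b..x} (\<lambda>t. sqrt ((t - a) * (t - b)) / t)"
    using assms by (intro continuous_intros) auto
  ultimately show ?thesis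
    using assms interval_integral_eq_integral_continuous by (simp add: integral_unique)
qed

definition mp_density :: "real \<Rightarrow> real \<Rightarrow> real \<Rightarrow> real" where
  "mp_density a b t = sqrt ((t - a) * (b - t)) / (2 * pi * t)"

lemma continuous_on_mp_density: "0 < a \<Longrightarrow> continuous_on {a..b} (mp_density a b)"
  unfolding mp_density_def by (intro continuous_intros) auto

lemma mp_density_nonneg: "0 < a \<Longrightarrow> t \<in> {a..b} \<Longrightarrow> 0 \<le> mp_density a b t"
  by (simp add: mp_density_def)

lemma mp_density_has_integral:
  fixes a b :: real
  assumes "0 < a" "a < b"
  shows "(mp_density a b has_integral (sqrt b - sqrt a)^2 / 4) {a..b}"
proof -
  have "((\<lambda>t. 1 / (2 * pi) * (sqrt ((t - a) * (b - t)) / t)) has_integral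
          1 / (2 * pi) * (pi * ((a + b) / 2 - sqrt (a * b)))) {a..b}"
    by (intro has_integral_mult_right semicircle_div_has_integral assms)
  moreover have "1 / (2 * pi) * (pi * ((a + b) / 2 - sqrt (a * b))) = (a + b - 2 * sqrt (a * b)) / 4"
    by (simp add: field_simps)
  moreover have "(\<lambda>t. 1 / (2 * pi) * (sqrt ((t - a) * (b - t)) / t)) = mp_density a b"
    by (simp add: mp_density_def fun_eq_iff)
  ultimately show ?thesis
    using assms by (simp only: power2_sqrt_diff less_imp_le)
qed

lemma mp_mass:
  fixes a b :: real
  assumes "0 < a" "a < b"
  shows "1 / (2 * pi) * (LBINT t=a..b. sqrt ((t - a) * (b - t)) / t) = (sqrt b - sqrt a)^2 / 4"
proof -
  have "continuous_on {a..b} (\<lambda>t. sqrt ((t - a) * (b - t)) / t)"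
    using assms by (intro continuous_intros) auto
  then have "(LBINT t=a..b. sqrt ((t - a) * (b - t)) / t) = pi * ((a + b) / 2 - sqrt (a * b))"
    using assms interval_integral_eq_integral_continuous integral_unique[OF semicircle_div_has_integral]
    by simp
  then show ?thesis
    using assms by (simp add: power2_sqrt_diff field_simps)
qed

lemma mp_density_stieltjes_has_integral:
  fixes a b x :: real
  assumes "0 < a" "a < b" "b < x"
  shows "((\<lambda>t. mp_density a b t / (x - t)) has_integral
           (x - sqrt (a * b) - sqrt ((x - a) * (x - b))) / (2 * x)) {a..b}"
proof -
  have "((\<lambda>t. 1 / (2 * pi * x) * (sqrt ((t - a) * (b - t)) / t + sqrt ((t - a) * (b - t)) / (x - t)))
      has_integral 1 / (2 * pi * x) * (pi * ((a + b) / 2 - sqrt (a * b))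
                                       + pi * (x - (a + b) / 2 - sqrt ((x - a) * (x - b))))) {a..b}"
    using assms
    by (intro has_integral_mult_right has_integral_add semicircle_div_has_integral
        semicircle_cauchy_has_integral) auto
  moreover have "1 / (2 * pi * x) * (pi * ((a + b) / 2 - sqrt (a * b))
                                     + pi * (x - (a + b) / 2 - sqrt ((x - a) * (x - b))))
      = (x - sqrt (a * b) - sqrt ((x - a) * (x - b))) / (2 * x)"
    using assms by (simp add: field_simps)
  moreover have "1 / (2 * pi * x) * (sqrt ((t - a) * (b - t)) / t + sqrt ((t - a) * (b - t)) / (x - t))
      = mp_density a b t / (x - t)" if "t \<in> {a..b}" for t
  proof -
    have "0 < t" "0 < x - t" "0 < x"
      using that assms by auto
    then show ?thesis
      by (simp add: mp_density_def field_simps)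
  qed
  ultimately show ?thesis
    using has_integral_cong by (metis (no_types, lifting))
qed

lemma mp_density_le:
  fixes a b t :: real
  assumes "0 < a" "t \<in> {a..b}"
  shows "mp_density a b t \<le> sqrt (b - a) / (2 * pi * a) * sqrt (b - t)"
proof -
  have "mp_density a b t = sqrt (t - a) / (2 * pi * t) * sqrt (b - t)"
    by (simp add: mp_density_def real_sqrt_mult)
  also have "\<dots> \<le> sqrt (b - a) / (2 * pi * a) * sqrt (b - t)"
    using assms by (intro mult_right_mono frac_le) auto
  finally show ?thesis .
qed

lemma mp_log_kernel_at_b_bounded:
  fixes a b t :: real
  assumes "0 < a" "a < b" "t \<in> {a..b}"
  shows "\<bar>mp_density a b t * ln (1 / \<bar>b - t\<bar>)\<bar> \<le> sqrt (b - a) / (2 * pi * a) * (2 + (b - a)^2)"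
proof (cases "t = b")
  case False
  then have s: "0 < b - t" "b - t \<le> b - a"
    using assms by auto
  have "\<bar>mp_density a b t * ln (1 / \<bar>b - t\<bar>)\<bar> = mp_density a b t * (\<bar>ln (b - t)\<bar>)"
    using s assms mp_density_nonneg[of a t b] by (simp add: abs_mult ln_div)
  also have "\<dots> \<le> sqrt (b - a) / (2 * pi * a) * (sqrt (b - t) * \<bar>ln (b - t)\<bar>)"
    using mult_right_mono[OF mp_density_le[OF assms(1,3)] abs_ge_zero[of "ln (b - t)"]]
    by (simp add: mult.assoc)
  also have "\<dots> \<le> sqrt (b - a) / (2 * pi * a) * (2 + (b - a)^2)"
    using sqrt_mult_abs_ln_le[OF s] assms by (intro mult_left_mono) auto
  finally show ?thesis .
qed (use assms in \<open>simp add: mp_density_def\<close>)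

lemma mp_log_kernel_integrable:
  fixes a b x :: real
  assumes "0 < a" "a < b" "b \<le> x"
  shows "set_integrable lborel {a..b} (\<lambda>t. mp_density a b t * ln (1 / \<bar>x - t\<bar>))"
proof (cases "x = b")
  case False
  then have "continuous_on {a..b} (\<lambda>t. mp_density a b t * ln (1 / \<bar>x - t\<bar>))"
    using assms by (intro continuous_intros continuous_on_mp_density) auto
  then show ?thesis
    unfolding set_integrable_def by (rule borel_integrable_compact[OF compact_Icc])
next
  case True
  show ?thesis
    unfolding set_integrable_def True
  proof (rule integrableI_bounded_set[where A = "{a..b}"
        and B = "sqrt (b - a) / (2 * pi * a) * (2 + (b - a)^2)"])
    show "(\<lambda>t. indicat_real {a..b} t *\<^sub>R (mp_density a b t * ln (1 / \<bar>b - t\<bar>))) \<in> borel_measurable lborel"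
      unfolding mp_density_def by measurable
    show "emeasure lborel {a..b} < \<infinity>"
      using assms by simp
    show "AE t in lborel. t \<in> {a..b} \<longrightarrow>
        norm (indicat_real {a..b} t *\<^sub>R (mp_density a b t * ln (1 / \<bar>b - t\<bar>)))
          \<le> sqrt (b - a) / (2 * pi * a) * (2 + (b - a)^2)"
      using mp_log_kernel_at_b_bounded[OF assms(1,2)] by (intro AE_I2) auto
  qed auto
qed

definition mp_potential :: "real \<Rightarrow> real \<Rightarrow> real \<Rightarrow> real" where
  "mp_potential a b x = integral {a..b} (\<lambda>t. mp_density a b t * ln (1 / \<bar>x - t\<bar>))"

lemma log_potential_mp_measure:
  fixes a b x :: real
  assumes "0 < a" "a < b" "b \<le> x"
  shows "log_potential (mp_measure a b) x = mp_potential a b x"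
proof -
  have "log_potential (mp_measure a b) x =
      (LINT t|lborel. (indicator {a..b} t * sqrt ((t - a) * (b - t)) / (2 * pi * t)) *\<^sub>R ln (1 / \<bar>x - t\<bar>))"
    unfolding log_potential_def mp_measure_def using assms
    by (intro integral_density) (auto simp: indicator_def)
  also have "\<dots> = (LINT t|lborel. indicator {a..b} t *\<^sub>R (mp_density a b t * ln (1 / \<bar>x - t\<bar>)))"
    by (intro Bochner_Integration.integral_cong) (auto simp: mp_density_def indicator_def)
  also have "\<dots> = mp_potential a b x"
    using set_borel_integral_eq_integral(2)[OF mp_log_kernel_integrable[OF assms]]
    by (simp add: mp_potential_def set_lebesgue_integral_def)
  finally show ?thesis .
qed

lemma mp_log_kernel_integrable_on:
  "0 < a \<Longrightarrow> a < b \<Longrightarrow> b \<le> x \<Longrightarrow> (\<lambda>t. mp_density a b t * ln (1 / \<bar>x - t\<bar>)) integrable_on {a..b}"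
  using set_borel_integral_eq_integral(1)[OF mp_log_kernel_integrable] by simp

lemma DERIV_mp_potential:
  fixes a b y :: real
  assumes "0 < a" "a < b" "b < y"
  shows "(mp_potential a b has_real_derivative
           - ((y - sqrt (a * b) - sqrt ((y - a) * (y - b))) / (2 * y))) (at y)"
proof -
  have "integral {a..b} (\<lambda>t. - (mp_density a b t / (y - t)))
      = - ((y - sqrt (a * b) - sqrt ((y - a) * (y - b))) / (2 * y))"
    by (intro integral_unique has_integral_neg mp_density_stieltjes_has_integral assms)
  with DERIV_integral_log_kernel[OF continuous_on_mp_density[OF assms(1)] assms(3)]
  have "((\<lambda>x. integral {a..b} (\<lambda>t. - (mp_density a b t * ln (x - t)))) has_real_derivative
      - ((y - sqrt (a * b) - sqrt ((y - a) * (y - b))) / (2 * y))) (at y)"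
    by simp
  then show ?thesis
  proof (rule has_field_derivative_transform_within_open)
    show "open {b<..}" "y \<in> {b<..}"
      using assms by auto
    fix x :: real
    assume "x \<in> {b<..}"
    show "integral {a..b} (\<lambda>t. - (mp_density a b t * ln (x - t))) = mp_potential a b x"
      unfolding mp_potential_def
    proof (rule integral_cong)
      fix t
      assume "t \<in> {a..b}"
      then have "0 < x - t"
        using \<open>x \<in> {b<..}\<close> by auto
      then show "- (mp_density a b t * ln (x - t)) = mp_density a b t * ln (1 / \<bar>x - t\<bar>)"
        by (simp add: ln_div)
    qed
  qed
qed

lemma mp_log_kernel_diff_le:
  fixes a b t y :: real
  assumes "0 < a" "t \<in> {a..<b}" "b < y"
  shows "\<bar>mp_density a b t * ln (1 / \<bar>y - t\<bar>) - mp_density a b t * ln (1 / \<bar>b - t\<bar>)\<bar>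
    \<le> 2 * (sqrt (b - a) / (2 * pi * a)) * sqrt (y - b)"
proof -
  define K where "K = sqrt (b - a) / (2 * pi * a)"
  define s where "s = b - t"
  define d where "d = y - b"
  have s: "0 < s" and d: "0 < d"
    using assms by (auto simp: s_def d_def)
  have "ln (1 / \<bar>y - t\<bar>) - ln (1 / \<bar>b - t\<bar>) = - ln (1 + d / s)"
  proof -
    have "\<bar>y - t\<bar> = s + d" "\<bar>b - t\<bar> = s"
      using s d by (auto simp: s_def d_def)
    moreover have "1 + d / s = (s + d) / s"
      using s by (simp add: field_simps)
    ultimately show ?thesis
      using s d by (simp add: ln_div)
  qed
  moreover have "0 \<le> mp_density a b t" "0 \<le> ln (1 + d / s)"
    using assms s d by (simp_all add: mp_density_nonneg)
  ultimately have "\<bar>mp_density a b t * ln (1 / \<bar>y - t\<bar>) - mp_density a b t * ln (1 / \<bar>b - t\<bar>)\<bar>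
      = mp_density a b t * ln (1 + d / s)"
    by (simp add: abs_mult flip: right_diff_distrib)
  also have "\<dots> \<le> (K * sqrt s) * (2 * sqrt (d / s))"
  proof (rule mult_mono)
    show "mp_density a b t \<le> K * sqrt s"
      using mp_density_le[of a t b] assms by (simp add: K_def s_def)
    show "ln (1 + d / s) \<le> 2 * sqrt (d / s)"
      using s d by (intro ln_one_plus_le_two_sqrt) simp
  qed (use s d assms in \<open>simp_all add: K_def\<close>)
  also have "\<dots> = 2 * K * sqrt d"
    using s by (simp add: real_sqrt_divide)
  finally show ?thesis
    by (simp add: K_def d_def)
qed

lemma mp_potential_diff_le:
  fixes a b y :: real
  assumes "0 < a" "a < b" "b < y"
  shows "\<bar>mp_potential a b y - mp_potential a b b\<bar>
    \<le> 2 * (sqrt (b - a) / (2 * pi * a)) * sqrt (y - b) * (b - a)"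
proof -
  let ?B = "2 * (sqrt (b - a) / (2 * pi * a)) * sqrt (y - b)"
  have diff: "((\<lambda>t. mp_density a b t * ln (1 / \<bar>y - t\<bar>) - mp_density a b t * ln (1 / \<bar>b - t\<bar>))
      has_integral mp_potential a b y - mp_potential a b b) {a..b}"
    unfolding mp_potential_def using assms
    by (intro has_integral_diff integrable_integral mp_log_kernel_integrable_on) auto
  have "0 \<le> ?B"
    using assms by simp
  from has_integral_bound_real[OF this _ diff, of "{b}"] show ?thesis
    using mp_log_kernel_diff_le[OF assms(1) _ assms(3)] assms by simp
qed

lemma continuous_on_mp_potential:
  fixes a b :: real
  assumes "0 < a" "a < b"
  shows "continuous_on {b..} (mp_potential a b)"
  unfolding continuous_on_eq_continuous_within
proof
  fix y :: real
  assume "y \<in> {b..}"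
  show "continuous (at y within {b..}) (mp_potential a b)"
  proof (cases "y = b")
    case False
    then have "b < y"
      using \<open>y \<in> {b..}\<close> by simp
    then show ?thesis
      using DERIV_mp_potential[OF assms] DERIV_isCont continuous_at_imp_continuous_at_within by blast
  next
    case True
    let ?B = "\<lambda>y. 2 * (sqrt (b - a) / (2 * pi * a)) * sqrt (y - b) * (b - a)"
    have "((\<lambda>y. mp_potential a b y - mp_potential a b b) \<longlongrightarrow> 0) (at b within {b..})"
    proof (rule Lim_null_comparison)
      show "\<forall>\<^sub>F y in at b within {b..}. norm (mp_potential a b y - mp_potential a b b) \<le> ?B y"
        unfolding eventually_at_filter using mp_potential_diff_le[OF assms]
        by (auto intro!: always_eventually)
      have "(?B \<longlongrightarrow> ?B b) (at b within {b..})"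
        by (intro tendsto_intros)
      then show "(?B \<longlongrightarrow> 0) (at b within {b..})"
        by simp
    qed
    then show ?thesis
      unfolding True continuous_within using Lim_null by blast
  qed
qed

lemma mp_potential_plus_log_eq:
  fixes a b x :: real
  assumes "0 < a" "a < b" "b < x"
  shows "mp_potential a b x + (sqrt b - sqrt a)^2 / 4 * ln x
    = integral {a..b} (\<lambda>t. mp_density a b t * ln (x / (x - t)))"
proof -
  have "(sqrt b - sqrt a)^2 / 4 * ln x = integral {a..b} (\<lambda>t. mp_density a b t * ln x)"
    using integral_unique[OF mp_density_has_integral[OF assms(1,2)]] by simp
  then have "mp_potential a b x + (sqrt b - sqrt a)^2 / 4 * ln x
      = integral {a..b} (\<lambda>t. mp_density a b t * ln (1 / \<bar>x - t\<bar>) + mp_density a b t * ln x)"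
    unfolding mp_potential_def using assms
    by (subst integral_add) (auto intro!: integrable_continuous_interval continuous_intros continuous_on_mp_density)
  also have "\<dots> = integral {a..b} (\<lambda>t. mp_density a b t * ln (x / (x - t)))"
  proof (rule integral_cong)
    fix t
    assume "t \<in> {a..b}"
    then have "0 < x - t" "0 < x"
      using assms by auto
    then show "mp_density a b t * ln (1 / \<bar>x - t\<bar>) + mp_density a b t * ln x
        = mp_density a b t * ln (x / (x - t))"
      by (simp add: ln_div algebra_simps)
  qed
  finally show ?thesis .
qed

lemma mp_potential_plus_log_tendsto:
  fixes a b :: real
  assumes "0 < a" "a < b"
  shows "((\<lambda>x. mp_potential a b x + (sqrt b - sqrt a)^2 / 4 * ln x) \<longlongrightarrow> 0) at_top"
proof -
  define m where "m = (sqrt b - sqrt a)^2 / 4"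
  let ?I = "\<lambda>x. integral {a..b} (\<lambda>t. mp_density a b t * ln (x / (x - t)))"
  have bounds: "0 \<le> ?I x \<and> ?I x \<le> m * ln (x / (x - b))" if "b < x" for x
  proof
    have int: "(\<lambda>t. mp_density a b t * ln (x / (x - t))) integrable_on {a..b}"
      "(\<lambda>t. mp_density a b t * ln (x / (x - b))) integrable_on {a..b}"
      using assms \<open>b < x\<close>
      by (intro integrable_continuous_interval continuous_intros continuous_on_mp_density; force)+
    have ln_le: "0 \<le> ln (x / (x - t)) \<and> ln (x / (x - t)) \<le> ln (x / (x - b))" if "t \<in> {a..b}" for t
      using that assms \<open>b < x\<close> by (auto intro!: divide_left_mono)
    show "0 \<le> ?I x"
      using int ln_le assms by (intro integral_nonneg) (auto intro!: mult_nonneg_nonneg mp_density_nonneg)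
    have "?I x \<le> integral {a..b} (\<lambda>t. mp_density a b t * ln (x / (x - b)))"
      using int ln_le assms by (intro integral_le) (auto intro!: mult_left_mono mp_density_nonneg)
    also have "\<dots> = m * ln (x / (x - b))"
      using integral_unique[OF mp_density_has_integral[OF assms]] by (simp add: m_def)
    finally show "?I x \<le> m * ln (x / (x - b))" .
  qed
  have "((\<lambda>x. ln (x / (x - b))) \<longlongrightarrow> 0) at_top"
    using assms by real_asymp
  then have upper: "((\<lambda>x. m * ln (x / (x - b))) \<longlongrightarrow> 0) at_top"
    by (rule tendsto_mult_right_zero)
  have "\<forall>\<^sub>F x in at_top. 0 \<le> ?I x"
    using eventually_gt_at_top[of b] by eventually_elim (rule bounds[THEN conjunct1])
  moreover have "\<forall>\<^sub>F x in at_top. ?I x \<le> m * ln (x / (x - b))"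
    using eventually_gt_at_top[of b] by eventually_elim (rule bounds[THEN conjunct2])
  ultimately have "(?I \<longlongrightarrow> 0) at_top"
    by (rule tendsto_sandwich[OF _ _ tendsto_const upper])
  moreover have "\<forall>\<^sub>F x in at_top. ?I x = mp_potential a b x + m * ln x"
    using eventually_gt_at_top[of b]
    by eventually_elim (rule mp_potential_plus_log_eq[OF assms, folded m_def, symmetric])
  ultimately show ?thesis
    unfolding m_def by (rule Lim_transform_eventually)
qed

definition mp_constant :: "real \<Rightarrow> real \<Rightarrow> real" where
  "mp_constant a b = (a + b) / 4 * (1 - ln ((b - a) / 4))
     - sqrt (a * b) / 2 * ln ((sqrt b + sqrt a) / (sqrt b - sqrt a))"

definition mp_potential_closed :: "real \<Rightarrow> real \<Rightarrow> real \<Rightarrow> real" where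
  "mp_potential_closed a b x = - (x - sqrt (a * b) * ln x) / 2 + mp_constant a b
     + 1 / 2 * (hyperbola_div_primitive a b x - hyperbola_div_primitive a b b)"

(* The constant C is exactly the one for which the closed form behaves like -m log x + o(1). *)
lemma mp_constant_eq:
  fixes a b :: real
  assumes "0 < a" "a < b"
  shows "mp_constant a b = (a + b) / 4 * (1 + ln 4) + sqrt (a * b) / 2 * ln (a + b - 2 * sqrt (a * b))
    + hyperbola_div_primitive a b b / 2"
proof -
  define sa where "sa = sqrt a"
  define sb where "sb = sqrt b"
  define c where "c = sqrt (a * b)"
  define Lm where "Lm = ln (sb - sa)"
  define Lp where "Lp = ln (sb + sa)"
  have s: "0 < sa" "sa < sb"
    using assms by (auto simp: sa_def sb_def)
  have ab: "a = sa^2" "b = sb^2" "c = sa * sb"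
    using assms by (auto simp: sa_def sb_def c_def real_sqrt_mult)
  have "b - a = (sb - sa) * (sb + sa)"
    unfolding ab by (simp add: power2_eq_square algebra_simps)
  then have ln_ba: "ln (b - a) = Lm + Lp"
    using s by (simp add: Lm_def Lp_def ln_mult)
  have "a + b - 2 * c = (sb - sa)^2"
    unfolding ab by (simp add: power2_eq_square algebra_simps)
  then have ln_gap: "ln (a + b - 2 * c) = 2 * Lm"
    using s by (simp add: Lm_def ln_realpow)
  have ln_quot: "ln ((sqrt b + sqrt a) / (sqrt b - sqrt a)) = Lp - Lm"
    using s by (simp add: ln_div Lm_def Lp_def flip: sa_def sb_def)
  have phi_b: "hyperbola_div_primitive a b b = - (a + b) / 2 * (Lm + Lp) - c * (Lm + Lp)"
  proof -
    have "(a + b) * b - 2 * a * b - 2 * sqrt (a * b) * sqrt ((b - a) * (b - b)) = b * (b - a)"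
      by (simp add: algebra_simps)
    then have "ln ((a + b) * b - 2 * a * b - 2 * sqrt (a * b) * sqrt ((b - a) * (b - b))) - ln b = ln (b - a)"
      using assms by (simp add: ln_mult)
    moreover have "2 * sqrt ((b - a) * (b - b)) + 2 * b - a - b = b - a"
      by simp
    ultimately show ?thesis
      unfolding hyperbola_div_primitive_def ln_ba[symmetric] c_def by (simp add: algebra_simps)
  qed
  have ln_ba4: "ln ((b - a) / 4) = Lm + Lp - ln 4"
    using assms ln_ba by (simp add: ln_div)
  show ?thesis
    unfolding mp_constant_def ln_quot ln_ba4 phi_b c_def[symmetric] ln_gap by (simp add: field_simps)
qed

lemma mp_potential_closed_plus_log_eq:
  fixes a b x :: real
  assumes "0 < a" "a < b" "b < x"
  shows "mp_potential_closed a b x + (sqrt b - sqrt a)^2 / 4 * ln x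
    = (sqrt ((x - a) * (x - b)) - x) / 2
      - (a + b) / 4 * ln ((2 * sqrt ((x - a) * (x - b)) + 2 * x - a - b) / x)
      - sqrt (a * b) / 2 * ln (((a + b) * x - 2 * a * b - 2 * sqrt (a * b) * sqrt ((x - a) * (x - b))) / x)
      + mp_constant a b - hyperbola_div_primitive a b b / 2"
proof -
  have "0 < x"
    using assms by simp
  moreover have "0 < 2 * sqrt ((x - a) * (x - b)) + 2 * x - a - b"
    "0 < (a + b) * x - 2 * a * b - 2 * sqrt (a * b) * sqrt ((x - a) * (x - b))"
    using hyperbola_div_primitive_log_args_pos[of a b x] assms by simp_all
  moreover have m: "(sqrt b - sqrt a)^2 / 4 = (a + b) / 4 - sqrt (a * b) / 2"
    using assms by (simp add: power2_sqrt_diff field_simps)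
  ultimately show ?thesis
    unfolding m mp_potential_closed_def hyperbola_div_primitive_def
    by (simp add: ln_div field_simps)
qed

lemma mp_potential_closed_plus_log_tendsto:
  fixes a b :: real
  assumes "0 < a" "a < b"
  shows "((\<lambda>x. mp_potential_closed a b x + (sqrt b - sqrt a)^2 / 4 * ln x) \<longlongrightarrow> 0) at_top"
proof -
  define c where "c = sqrt (a * b)"
  let ?E = "\<lambda>x. (sqrt ((x - a) * (x - b)) - x) / 2
      - (a + b) / 4 * ln ((2 * sqrt ((x - a) * (x - b)) + 2 * x - a - b) / x)
      - c / 2 * ln (((a + b) * x - 2 * a * b - 2 * c * sqrt ((x - a) * (x - b))) / x)
      + mp_constant a b - hyperbola_div_primitive a b b / 2"
  have "((\<lambda>x. sqrt ((x - a) * (x - b)) - x) \<longlongrightarrow> - (a + b) / 2) at_top"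
    by real_asymp
  moreover have "((\<lambda>x. (2 * sqrt ((x - a) * (x - b)) + 2 * x - a - b) / x) \<longlongrightarrow> 4) at_top"
    by real_asymp
  moreover have "((\<lambda>x. ((a + b) * x - 2 * a * b - 2 * c * sqrt ((x - a) * (x - b))) / x)
      \<longlongrightarrow> a + b - 2 * c) at_top"
    by real_asymp
  moreover have "0 < a + b - 2 * c"
    using two_sqrt_mult_less_add[of a b] assms by (simp add: c_def)
  ultimately have lim: "(?E \<longlongrightarrow> (- (a + b) / 2) / 2 - (a + b) / 4 * ln 4 - c / 2 * ln (a + b - 2 * c)
      + mp_constant a b - hyperbola_div_primitive a b b / 2) at_top"
    by (intro tendsto_intros) auto
  have zero: "(- (a + b) / 2) / 2 - (a + b) / 4 * ln 4 - c / 2 * ln (a + b - 2 * c)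
      + mp_constant a b - hyperbola_div_primitive a b b / 2 = 0"
    using mp_constant_eq[OF assms] by (simp add: c_def field_simps)
  have "(?E \<longlongrightarrow> 0) at_top"
    using lim unfolding zero .
  moreover have "\<forall>\<^sub>F x in at_top. ?E x = mp_potential_closed a b x + (sqrt b - sqrt a)^2 / 4 * ln x"
    using eventually_gt_at_top[of b]
    by eventually_elim (rule mp_potential_closed_plus_log_eq[OF assms, folded c_def, symmetric])
  ultimately show ?thesis
    by (rule Lim_transform_eventually)
qed

lemma DERIV_mp_potential_closed:
  fixes a b y :: real
  assumes "0 < a" "a < b" "b < y"
  shows "(mp_potential_closed a b has_real_derivative
           - ((y - sqrt (a * b) - sqrt ((y - a) * (y - b))) / (2 * y))) (at y)"
proof -
  have "0 < y"
    using assms by simp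
  then have "((\<lambda>x. - (x - sqrt (a * b) * ln x) / 2 + mp_constant a b
        + 1 / 2 * (hyperbola_div_primitive a b x - hyperbola_div_primitive a b b))
      has_real_derivative - (1 - sqrt (a * b) * (1 / y)) / 2 + 0
        + 1 / 2 * (sqrt ((y - a) * (y - b)) / y - 0)) (at y)"
    by (intro DERIV_add DERIV_cdivide DERIV_minus DERIV_diff DERIV_cmult DERIV_ident
        DERIV_ln_divide DERIV_const DERIV_hyperbola_div_primitive assms)
  moreover have "- (1 - sqrt (a * b) * (1 / y)) / 2 + 0 + 1 / 2 * (sqrt ((y - a) * (y - b)) / y - 0)
      = - ((y - sqrt (a * b) - sqrt ((y - a) * (y - b))) / (2 * y))"
    using \<open>0 < y\<close> by (simp add: field_simps)
  ultimately show ?thesis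
    unfolding mp_potential_closed_def[abs_def] by simp
qed

lemma continuous_on_mp_potential_closed:
  "0 < a \<Longrightarrow> a < b \<Longrightarrow> continuous_on {b..} (mp_potential_closed a b)"
  unfolding mp_potential_closed_def[abs_def]
  by (intro continuous_intros continuous_on_hyperbola_div_primitive) auto

lemma mp_potential_eq_closed:
  fixes a b x :: real
  assumes "0 < a" "a < b" "b \<le> x"
  shows "mp_potential a b x = mp_potential_closed a b x"
proof -
  have "mp_potential a b x - mp_potential_closed a b x = 0"
  proof (rule DERIV_zero_tendsto_zero_imp_zero[where f = "\<lambda>x. mp_potential a b x - mp_potential_closed a b x"])
    show "continuous_on {b..} (\<lambda>x. mp_potential a b x - mp_potential_closed a b x)"
      using assms by (intro continuous_intros continuous_on_mp_potential continuous_on_mp_potential_closed)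
    show "((\<lambda>x. mp_potential a b x - mp_potential_closed a b x) has_real_derivative 0) (at y)"
      if "b < y" for y
      using DERIV_diff[OF DERIV_mp_potential[OF assms(1,2) that] DERIV_mp_potential_closed[OF assms(1,2) that]]
      by simp
    have "((\<lambda>x. (mp_potential a b x + (sqrt b - sqrt a)^2 / 4 * ln x)
        - (mp_potential_closed a b x + (sqrt b - sqrt a)^2 / 4 * ln x)) \<longlongrightarrow> 0 - 0) at_top"
      using assms by (intro tendsto_diff mp_potential_plus_log_tendsto mp_potential_closed_plus_log_tendsto)
    then show "((\<lambda>x. mp_potential a b x - mp_potential_closed a b x) \<longlongrightarrow> 0) at_top"
      by simp
  qed (use assms in auto)
  then show ?thesis
    by simp
qed

theorem lemma4p4:
  fixes a b :: real
  assumes "0 < a" and "a < b"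
  defines "\<mu> \<equiv> mp_measure a b"
  defines "C \<equiv> (a + b) / 4 * (1 - ln ((b - a) / 4))
              - sqrt (a * b) / 2 * ln ((sqrt b + sqrt a) / (sqrt b - sqrt a))"
  shows "1 / (2 * pi) * (LBINT t=a..b. sqrt ((t - a) * (b - t)) / t) = (sqrt b - sqrt a)^2 / 4
       \<and> ((\<lambda>x. log_potential \<mu> x + (sqrt b - sqrt a)^2 / 4 * ln x) \<longlongrightarrow> 0) at_top
       \<and> (\<forall>x\<ge>b. log_potential \<mu> x =
           - (x - sqrt (a * b) * ln x) / 2 + C
           + 1 / 2 * (LBINT t=b..x. sqrt ((t - a) * (t - b)) / t))"
proof (intro conjI allI impI)
  show "1 / (2 * pi) * (LBINT t=a..b. sqrt ((t - a) * (b - t)) / t) = (sqrt b - sqrt a)^2 / 4"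
    using mp_mass[OF assms(1,2)] .
  have "\<forall>\<^sub>F x in at_top. mp_potential a b x + (sqrt b - sqrt a)^2 / 4 * ln x
      = log_potential \<mu> x + (sqrt b - sqrt a)^2 / 4 * ln x"
    using eventually_ge_at_top[of b]
    by eventually_elim (simp add: \<mu>_def log_potential_mp_measure assms)
  with mp_potential_plus_log_tendsto[OF assms(1,2)]
  show "((\<lambda>x. log_potential \<mu> x + (sqrt b - sqrt a)^2 / 4 * ln x) \<longlongrightarrow> 0) at_top"
    by (rule Lim_transform_eventually)
  fix x :: real
  assume "b \<le> x"
  then show "log_potential \<mu> x = - (x - sqrt (a * b) * ln x) / 2 + C
      + 1 / 2 * (LBINT t=b..x. sqrt ((t - a) * (t - b)) / t)"
    using assms
    by (simp add: \<mu>_def C_def log_potential_mp_measure mp_potential_eq_closed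
        mp_potential_closed_def mp_constant_def hyperbola_div_interval_integral)
qed

end
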